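(* If there exist an orthogonal design of order $4m$ and type $(s_1,\ldots,s_u)$ and two Hadamard matrices of order $4n$ that are quasi-unbiased for parameters $(4n,4n,l,a)$, then there exist two orthogonal designs of order $8mn$ and type $(2ns_1,\ldots,2ns_u)$ that are unbiased with parameter $\alpha=16n^2/a$.
   Context: A Hadamard matrix of order $n$ is an $n\times n$ $(1,-1)$-matrix $H$ with $HH^\top=nI_n$; a weighing matrix of order $n$ and weight $k$ is an $n\times n$ $(0,1,-1)$-matrix $W$ with $WW^\top=kI_n$. Two weighing matrices (in particular Hadamard matrices) $W_1,W_2$ of order $n$ and weight $k$ are quasi-unbiased for parameters $(n,k,l,a)$ if $\frac1{\sqrt a}W_1W_2^\top$ is a weighing matrix of order $n$ and weight $l$. An orthogonal design of order $n$ and type $(s_1,\ldots,s_u)$ in distinct commuting real indeterminates $x_1,\ldots,x_u$ is an $n\times n$ matrix $D$ with entries in $\{0,\pm x_1,\ldots,\pm x_u\}$ with $DD^\top=(s_1x_1^2+\cdots+s_ux_u^2)I_n$. Two orthogonal designs $D_1,D_2$ of the same order and type $(t_1,\ldots,t_u)$ in the same variables are unbiased with parameter $\alpha$ if $\alpha>0$ and there is a $(0,1,-1)$-matrix $V$ with $D_1D_2^\top=\frac{t_1x_1^2+\cdots+t_ux_u^2}{\sqrt\alpha}V$. *)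

theory Defs
  imports "Jordan_Normal_Form.Matrix"
begin

definition weighing_matrix :: "nat \<Rightarrow> nat \<Rightarrow> real mat \<Rightarrow> bool" where
  "weighing_matrix n k W \<longleftrightarrow> W \<in> carrier_mat n n \<and>
     (\<forall>i<n. \<forall>j<n. W $$ (i,j) \<in> {0, 1, -1}) \<and>
     W * W\<^sup>T = real k \<cdot>\<^sub>m 1\<^sub>m n"

definition hadamard_matrix :: "nat \<Rightarrow> real mat \<Rightarrow> bool" where
  "hadamard_matrix n H \<longleftrightarrow> H \<in> carrier_mat n n \<and>
     (\<forall>i<n. \<forall>j<n. H $$ (i,j) \<in> {1, -1}) \<and>
     H * H\<^sup>T = real n \<cdot>\<^sub>m 1\<^sub>m n"

text \<open>Quasi-unbiased weighing matrices for parameters (n,k,l,a); a > 0 so that 1/sqrt a makes sense.\<close>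
definition quasi_unbiased :: "nat \<Rightarrow> nat \<Rightarrow> nat \<Rightarrow> real \<Rightarrow> real mat \<Rightarrow> real mat \<Rightarrow> bool" where
  "quasi_unbiased n k l a W1 W2 \<longleftrightarrow> weighing_matrix n k W1 \<and> weighing_matrix n k W2 \<and>
     a > 0 \<and> weighing_matrix n l ((1 / sqrt a) \<cdot>\<^sub>m (W1 * W2\<^sup>T))"

text \<open>Orthogonal designs in indeterminates x_1..x_u are encoded as integer matrices:
  entry 0 stands for 0, entry k (1 \<le> k \<le> u) for x_k and entry -k for -x_k.  A polynomial identity over the
  reals holds iff it holds for all real assignments.\<close>
definition od_eval :: "int mat \<Rightarrow> (nat \<Rightarrow> real) \<Rightarrow> real mat" where
  "od_eval D x = mat (dim_row D) (dim_col D)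
     (\<lambda>(i,j). real_of_int (sgn (D $$ (i,j))) * x (nat \<bar>D $$ (i,j)\<bar>))"

definition od_form :: "nat \<Rightarrow> (nat \<Rightarrow> nat) \<Rightarrow> (nat \<Rightarrow> real) \<Rightarrow> real" where
  "od_form u s x = (\<Sum>k=1..u. real (s k) * (x k)\<^sup>2)"

definition orthogonal_design :: "nat \<Rightarrow> nat \<Rightarrow> (nat \<Rightarrow> nat) \<Rightarrow> int mat \<Rightarrow> bool" where
  "orthogonal_design n u s D \<longleftrightarrow> D \<in> carrier_mat n n \<and>
     (\<forall>i<n. \<forall>j<n. \<bar>D $$ (i,j)\<bar> \<le> int u) \<and>
     (\<forall>x. od_eval D x * (od_eval D x)\<^sup>T = od_form u s x \<cdot>\<^sub>m 1\<^sub>m n)"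

definition unbiased_ods :: "nat \<Rightarrow> nat \<Rightarrow> (nat \<Rightarrow> nat) \<Rightarrow> real \<Rightarrow> int mat \<Rightarrow> int mat \<Rightarrow> bool" where
  "unbiased_ods n u t \<alpha> D1 D2 \<longleftrightarrow>
     orthogonal_design n u t D1 \<and> orthogonal_design n u t D2 \<and> \<alpha> > 0 \<and>
     (\<exists>V \<in> carrier_mat n n. (\<forall>i<n. \<forall>j<n. V $$ (i,j) \<in> {0, 1, -1}) \<and>
        (\<forall>x. od_eval D1 x * (od_eval D2 x)\<^sup>T = (od_form u t x / sqrt \<alpha>) \<cdot>\<^sub>m V))"

end

theory Submission
  imports Defs
begin

text \<open>Split the orthogonal design \<open>D\<close> of order \<open>4m\<close> into its upper and lower halves \<open>A\<close>, \<open>B\<close>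
  (\<open>2m \<times> 4m\<close>) and a Hadamard matrix \<open>H\<close> of order \<open>4n\<close> into its left and right halves \<open>H\<^sub>L\<close>, \<open>H\<^sub>R\<close>.
  The matrices \<open>P = (H\<^sub>L + H\<^sub>R)/2\<close> and \<open>Q = (H\<^sub>L - H\<^sub>R)/2\<close> are \<open>(0,\<plusminus>1)\<close>-matrices with
  complementary supports, so \<open>A \<otimes> P + B \<otimes> Q\<close> is again a matrix over \<open>0, \<plusminus>x\<^sub>k\<close>.
  Since the rows of \<open>D\<close> are orthogonal of squared norm \<open>f = \<Sum> s\<^sub>k x\<^sub>k\<^sup>2\<close>, we have
  \<open>A A\<^sup>T = B B\<^sup>T = f I\<close> and \<open>A B\<^sup>T = 0\<close>, whence
  \<open>(A \<otimes> P\<^sub>1 + B \<otimes> Q\<^sub>1)(A \<otimes> P\<^sub>2 + B \<otimes> Q\<^sub>2)\<^sup>T = f I \<otimes> (P\<^sub>1 P\<^sub>2\<^sup>T + Q\<^sub>1 Q\<^sub>2\<^sup>T) = (f/2) I \<otimes> H\<^sub>1 H\<^sub>2\<^sup>T\<close>.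
  For \<open>H\<^sub>1 = H\<^sub>2\<close> this is \<open>2nf I\<close>, an orthogonal design of type \<open>2n s\<close>; for a quasi-unbiased
  pair it is \<open>(f \<surd>a/2) I \<otimes> W\<close> with \<open>W\<close> a weighing matrix, which is unbiasedness with
  \<open>\<surd>\<alpha> = 4n/\<surd>a\<close>.\<close>

lemma sum_lessThan_mult:
  fixes g :: "nat \<Rightarrow> 'a::comm_monoid_add"
  shows "(\<Sum>c<A * B. g c) = (\<Sum>j<A. \<Sum>t<B. g (j * B + t))"
proof -
  have "(\<Sum>c<A * B. g c) = (\<Sum>j<A. \<Sum>c\<in>{j * B..<j * B + B}. g c)"
    by (rule sum.nat_group[symmetric])
  also have "\<dots> = (\<Sum>j<A. \<Sum>t<B. g (j * B + t))"
    by (simp add: sum.atLeastLessThan_shift_0 atLeast0LessThan comp_def)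
  finally show ?thesis .
qed

lemma mult_add_index:
  fixes j t q :: nat
  assumes "j < N" "t < q"
  shows "j * q + t < N * q" "(j * q + t) div q = j" "(j * q + t) mod q = t"
proof -
  have "j * q + t < Suc j * q"
    using assms(2) by simp
  also have "\<dots> \<le> N * q"
    using assms(1) by (intro mult_right_mono) auto
  finally show "j * q + t < N * q" .
  show "(j * q + t) div q = j" "(j * q + t) mod q = t"
    using assms(2) by auto
qed

lemma mult_transpose_index:
  assumes "A \<in> carrier_mat M N" "B \<in> carrier_mat M' N" "i < M" "k < M'"
  shows "(A * B\<^sup>T) $$ (i, k) = (\<Sum>j<N. A $$ (i, j) * B $$ (k, j))"
  using assms by (simp add: scalar_prod_def atLeast0LessThan)

lemma rows_orthogonal_sum:
  fixes E :: "'a :: comm_ring_1 mat"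
  assumes "E \<in> carrier_mat M N" "E * E\<^sup>T = f \<cdot>\<^sub>m 1\<^sub>m M" "i < M" "k < M"
  shows "(\<Sum>j<N. E $$ (i, j) * E $$ (k, j)) = (if i = k then f else 0)"
proof -
  have "(E * E\<^sup>T) $$ (i, k) = (if i = k then f else 0)"
    using assms(2-4) by simp
  then show ?thesis
    using mult_transpose_index[OF assms(1,1,3,4)] by simp
qed

lemma rows_halves_combination_sum:
  fixes E :: "'a :: comm_ring_1 mat"
  assumes E: "E \<in> carrier_mat (2 * K) N" "E * E\<^sup>T = f \<cdot>\<^sub>m 1\<^sub>m (2 * K)" and "i < K" "k < K"
  shows "(\<Sum>j<N. (E $$ (i, j) * a + E $$ (i + K, j) * b) * (E $$ (k, j) * c + E $$ (k + K, j) * d))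
    = (if i = k then f * (a * c + b * d) else 0)"
proof -
  have "(\<Sum>j<N. (E $$ (i, j) * a + E $$ (i + K, j) * b) * (E $$ (k, j) * c + E $$ (k + K, j) * d))
    = a * c * (\<Sum>j<N. E $$ (i, j) * E $$ (k, j)) + a * d * (\<Sum>j<N. E $$ (i, j) * E $$ (k + K, j))
      + b * c * (\<Sum>j<N. E $$ (i + K, j) * E $$ (k, j)) + b * d * (\<Sum>j<N. E $$ (i + K, j) * E $$ (k + K, j))"
    by (simp add: sum_distrib_left sum.distrib[symmetric] algebra_simps)
  then show ?thesis
    using assms by (simp add: rows_orthogonal_sum[OF E] algebra_simps)
qed

text \<open>\<open>halves_kron K E P Q = A \<otimes> P + B \<otimes> Q\<close>, where \<open>A\<close> and \<open>B\<close> are the first and the next \<open>K\<close> rows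
  of \<open>E\<close>; \<open>diag_blocks K M = I\<^sub>K \<otimes> M\<close>.\<close>
definition halves_kron :: "nat \<Rightarrow> 'a::comm_ring_1 mat \<Rightarrow> 'a mat \<Rightarrow> 'a mat \<Rightarrow> 'a mat" where
  "halves_kron K E P Q = mat (K * dim_row P) (dim_col E * dim_col P) (\<lambda>(r, c).
     E $$ (r div dim_row P, c div dim_col P) * P $$ (r mod dim_row P, c mod dim_col P) +
     E $$ (r div dim_row P + K, c div dim_col P) * Q $$ (r mod dim_row P, c mod dim_col P))"

definition diag_blocks :: "nat \<Rightarrow> 'a::zero mat \<Rightarrow> 'a mat" where
  "diag_blocks K M = mat (K * dim_row M) (K * dim_col M) (\<lambda>(r, c).
     if r div dim_row M = c div dim_col M then M $$ (r mod dim_row M, c mod dim_col M) else 0)"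

lemma halves_kron_mult_transpose:
  fixes E :: "'a :: comm_ring_1 mat"
  assumes E: "E \<in> carrier_mat (2 * K) N" "E * E\<^sup>T = f \<cdot>\<^sub>m 1\<^sub>m (2 * K)"
    and P: "P \<in> carrier_mat p q" "Q \<in> carrier_mat p q"
    and P': "P' \<in> carrier_mat p' q" "Q' \<in> carrier_mat p' q"
  shows "halves_kron K E P Q * (halves_kron K E P' Q')\<^sup>T = f \<cdot>\<^sub>m diag_blocks K (P * P'\<^sup>T + Q * Q'\<^sup>T)"
proof (rule eq_matI)
  fix r r' assume "r < dim_row (f \<cdot>\<^sub>m diag_blocks K (P * P'\<^sup>T + Q * Q'\<^sup>T))"
    "r' < dim_col (f \<cdot>\<^sub>m diag_blocks K (P * P'\<^sup>T + Q * Q'\<^sup>T))"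
  then have r: "r < K * p" "r' < K * p'"
    using P P' by (auto simp: diag_blocks_def)
  moreover have "0 < p" "0 < p'"
    using r by (auto intro!: gr0I)
  ultimately have ids: "r div p < K" "r' div p' < K" "r mod p < p" "r' mod p' < p'"
    by (auto simp: less_mult_imp_div_less mult.commute)
  have "(halves_kron K E P Q * (halves_kron K E P' Q')\<^sup>T) $$ (r, r')
      = (\<Sum>c<N * q. halves_kron K E P Q $$ (r, c) * halves_kron K E P' Q' $$ (r', c))"
    by (rule mult_transpose_index) (use r E P P' in \<open>auto simp: halves_kron_def\<close>)
  also have "\<dots> = (\<Sum>t<q. \<Sum>j<N.
      (E $$ (r div p, j) * P $$ (r mod p, t) + E $$ (r div p + K, j) * Q $$ (r mod p, t)) *
      (E $$ (r' div p', j) * P' $$ (r' mod p', t) + E $$ (r' div p' + K, j) * Q' $$ (r' mod p', t)))"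
    unfolding sum_lessThan_mult
    by (subst sum.swap, intro sum.cong refl) (use r E P P' in \<open>auto simp: halves_kron_def mult_add_index\<close>)
  also have "\<dots> = (if r div p = r' div p'
      then f * (\<Sum>t<q. P $$ (r mod p, t) * P' $$ (r' mod p', t) + Q $$ (r mod p, t) * Q' $$ (r' mod p', t))
      else 0)"
    by (simp add: rows_halves_combination_sum[OF E ids(1,2)] sum_distrib_left)
  also have "\<dots> = (f \<cdot>\<^sub>m diag_blocks K (P * P'\<^sup>T + Q * Q'\<^sup>T)) $$ (r, r')"
    using r ids P P' by (simp add: diag_blocks_def sum.distrib scalar_prod_def atLeast0LessThan)
  finally show "(halves_kron K E P Q * (halves_kron K E P' Q')\<^sup>T) $$ (r, r') = \<dots>" .
qed (use E P P' in \<open>auto simp: halves_kron_def diag_blocks_def\<close>)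

lemma smult_smult_mat: "a \<cdot>\<^sub>m (b \<cdot>\<^sub>m A) = (a * b) \<cdot>\<^sub>m A"
  for A :: "'a::semigroup_mult mat"
  by (rule eq_matI) (auto simp: mult.assoc)

lemma diag_blocks_smult: "diag_blocks K (c \<cdot>\<^sub>m M) = c \<cdot>\<^sub>m diag_blocks K M"
  for M :: "'a::semiring_0 mat"
proof (rule eq_matI)
  fix i j assume "i < dim_row (c \<cdot>\<^sub>m diag_blocks K M)" "j < dim_col (c \<cdot>\<^sub>m diag_blocks K M)"
  then have "i mod dim_row M < dim_row M" "j mod dim_col M < dim_col M"
    by (auto simp: diag_blocks_def intro!: mod_less_divisor gr0I)
  then show "diag_blocks K (c \<cdot>\<^sub>m M) $$ (i, j) = (c \<cdot>\<^sub>m diag_blocks K M) $$ (i, j)"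
    using \<open>i < _\<close> \<open>j < _\<close> by (auto simp: diag_blocks_def)
qed (auto simp: diag_blocks_def)

lemma diag_blocks_smult_one:
  "diag_blocks K (c \<cdot>\<^sub>m 1\<^sub>m p) = c \<cdot>\<^sub>m (1\<^sub>m (K * p) :: 'a::semiring_1 mat)"
proof (rule eq_matI)
  fix r r' assume "r < dim_row (c \<cdot>\<^sub>m (1\<^sub>m (K * p) :: 'a mat))" "r' < dim_col (c \<cdot>\<^sub>m (1\<^sub>m (K * p) :: 'a mat))"
  then have "r < K * p" "r' < K * p" by auto
  moreover have "r = r' \<longleftrightarrow> r div p = r' div p \<and> r mod p = r' mod p"
    by (metis div_mult_mod_eq)
  moreover have "0 < p"
    using calculation by (auto intro!: gr0I)
  ultimately show "diag_blocks K (c \<cdot>\<^sub>m 1\<^sub>m p) $$ (r, r') = (c \<cdot>\<^sub>m (1\<^sub>m (K * p) :: 'a mat)) $$ (r, r')"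
    by (auto simp: diag_blocks_def)
qed (auto simp: diag_blocks_def)

definition col_halves_sum :: "nat \<Rightarrow> real mat \<Rightarrow> real mat" where
  "col_halves_sum h H = mat (dim_row H) h (\<lambda>(i, j). (H $$ (i, j) + H $$ (i, j + h)) / 2)"

definition col_halves_diff :: "nat \<Rightarrow> real mat \<Rightarrow> real mat" where
  "col_halves_diff h H = mat (dim_row H) h (\<lambda>(i, j). (H $$ (i, j) - H $$ (i, j + h)) / 2)"

lemma col_halves_mult_transpose:
  assumes H: "H \<in> carrier_mat p (2 * h)" and H': "H' \<in> carrier_mat p' (2 * h)"
  shows "col_halves_sum h H * (col_halves_sum h H')\<^sup>T + col_halves_diff h H * (col_halves_diff h H')\<^sup>T
    = (1 / 2) \<cdot>\<^sub>m (H * H'\<^sup>T)"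
proof (rule eq_matI)
  fix i k assume "i < dim_row ((1 / 2) \<cdot>\<^sub>m (H * H'\<^sup>T))" "k < dim_col ((1 / 2) \<cdot>\<^sub>m (H * H'\<^sup>T))"
  then have ik: "i < p" "k < p'"
    using H H' by auto
  have "(H * H'\<^sup>T) $$ (i, k) = (\<Sum>j<2. \<Sum>t<h. H $$ (i, j * h + t) * H' $$ (k, j * h + t))"
    using mult_transpose_index[OF H H' ik] by (simp add: sum_lessThan_mult)
  also have "\<dots> = (\<Sum>t<h. H $$ (i, t) * H' $$ (k, t) + H $$ (i, t + h) * H' $$ (k, t + h))"
    by (simp add: numeral_2_eq_2 sum.distrib add.commute)
  also have "\<dots> = 2 * ((\<Sum>t<h. (H $$ (i, t) + H $$ (i, t + h)) / 2 * ((H' $$ (k, t) + H' $$ (k, t + h)) / 2))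
      + (\<Sum>t<h. (H $$ (i, t) - H $$ (i, t + h)) / 2 * ((H' $$ (k, t) - H' $$ (k, t + h)) / 2)))"
    by (simp add: sum_distrib_left sum.distrib[symmetric], rule sum.cong) (auto simp: field_simps)
  also have "\<dots> = 2 * (col_halves_sum h H * (col_halves_sum h H')\<^sup>T
      + col_halves_diff h H * (col_halves_diff h H')\<^sup>T) $$ (i, k)"
    using ik H H'
    by (simp add: col_halves_sum_def col_halves_diff_def scalar_prod_def atLeast0LessThan)
  finally show "(col_halves_sum h H * (col_halves_sum h H')\<^sup>T + col_halves_diff h H * (col_halves_diff h H')\<^sup>T) $$ (i, k)
    = ((1 / 2) \<cdot>\<^sub>m (H * H'\<^sup>T)) $$ (i, k)"
    using ik H H' by simp
qed (use H H' in \<open>auto simp: col_halves_sum_def col_halves_diff_def\<close>)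

text \<open>For a \<open>\<plusminus>1\<close> matrix \<open>H\<close>, at every position exactly one of \<open>col_halves_sum h H\<close> and
  \<open>col_halves_diff h H\<close> vanishes and the other equals the entry of \<open>H\<close>; so the evaluation of this
  design is \<open>halves_kron K\<close> applied to the evaluation of \<open>D\<close> and these two halves.\<close>
definition od_halves_kron :: "nat \<Rightarrow> nat \<Rightarrow> int mat \<Rightarrow> real mat \<Rightarrow> int mat" where
  "od_halves_kron K h D H = mat (K * dim_row H) (dim_col D * h) (\<lambda>(r, c).
     (if H $$ (r mod dim_row H, c mod h) > 0 then 1 else -1) *
     (if H $$ (r mod dim_row H, c mod h) = H $$ (r mod dim_row H, c mod h + h)
      then D $$ (r div dim_row H, c div h) else D $$ (r div dim_row H + K, c div h)))"

lemma od_eval_od_halves_kron: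
  assumes D: "D \<in> carrier_mat (2 * K) N"
    and H: "H \<in> carrier_mat p (2 * h)" "\<forall>i<p. \<forall>j<2 * h. H $$ (i, j) \<in> {1, -1}"
  shows "od_eval (od_halves_kron K h D H) x
    = halves_kron K (od_eval D x) (col_halves_sum h H) (col_halves_diff h H)"
proof (rule eq_matI)
  fix r c
  assume "r < dim_row (halves_kron K (od_eval D x) (col_halves_sum h H) (col_halves_diff h H))"
    "c < dim_col (halves_kron K (od_eval D x) (col_halves_sum h H) (col_halves_diff h H))"
  then have rc: "r < K * p" "c < N * h"
    using D H by (auto simp: halves_kron_def od_eval_def col_halves_sum_def)
  moreover have "0 < p" "0 < h"
    using rc by (auto intro!: gr0I)
  ultimately have idx: "r div p < K" "c div h < N" "r mod p < p" "c mod h < h"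
    by (auto simp: less_mult_imp_div_less mult.commute)
  then have "H $$ (r mod p, c mod h) \<in> {1, -1}" "H $$ (r mod p, c mod h + h) \<in> {1, -1}"
    using H by auto
  then show "od_eval (od_halves_kron K h D H) x $$ (r, c)
    = halves_kron K (od_eval D x) (col_halves_sum h H) (col_halves_diff h H) $$ (r, c)"
    using rc idx D H(1)
    by (auto simp: od_eval_def od_halves_kron_def halves_kron_def col_halves_sum_def
        col_halves_diff_def sgn_mult abs_mult)
qed (use D H in \<open>auto simp: od_eval_def od_halves_kron_def halves_kron_def col_halves_sum_def\<close>)

lemma od_halves_kron_carrier: "od_halves_kron K h D H \<in> carrier_mat (K * dim_row H) (dim_col D * h)"
  by (simp add: od_halves_kron_def)

lemma od_halves_kron_entry_bound:
  assumes D: "D \<in> carrier_mat (2 * K) N" "\<forall>i<2 * K. \<forall>j<N. \<bar>D $$ (i, j)\<bar> \<le> b"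
    and rc: "r < K * dim_row H" "c < N * h"
  shows "\<bar>od_halves_kron K h D H $$ (r, c)\<bar> \<le> b"
proof -
  have "r div dim_row H < K" "c div h < N"
    using rc by (auto simp: less_mult_imp_div_less mult.commute)
  moreover have "\<bar>od_halves_kron K h D H $$ (r, c)\<bar> =
    (if H $$ (r mod dim_row H, c mod h) = H $$ (r mod dim_row H, c mod h + h)
     then \<bar>D $$ (r div dim_row H, c div h)\<bar> else \<bar>D $$ (r div dim_row H + K, c div h)\<bar>)"
    using rc D(1) by (simp add: od_halves_kron_def abs_mult)
  ultimately show ?thesis
    using D(2) by auto
qed

lemma od_form_scale: "od_form u (\<lambda>i. h * s i) x = real h * od_form u s x"
  by (simp add: od_form_def sum_distrib_left algebra_simps)

lemma od_halves_kron_mult_transpose: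
  assumes D: "orthogonal_design (2 * K) u s D"
    and H: "hadamard_matrix (2 * h) H" and H': "hadamard_matrix (2 * h) H'"
  shows "od_eval (od_halves_kron K h D H) x * (od_eval (od_halves_kron K h D H') x)\<^sup>T
    = od_form u s x \<cdot>\<^sub>m diag_blocks K ((1 / 2) \<cdot>\<^sub>m (H * H'\<^sup>T))"
proof -
  have Dc: "D \<in> carrier_mat (2 * K) (2 * K)"
    and EE: "od_eval D x * (od_eval D x)\<^sup>T = od_form u s x \<cdot>\<^sub>m 1\<^sub>m (2 * K)"
    using D by (auto simp: orthogonal_design_def)
  have E: "od_eval D x \<in> carrier_mat (2 * K) (2 * K)"
    using Dc by (simp add: od_eval_def)
  have Hc: "H \<in> carrier_mat (2 * h) (2 * h)" "H' \<in> carrier_mat (2 * h) (2 * h)"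
    and Hpm: "\<forall>i<2 * h. \<forall>j<2 * h. H $$ (i, j) \<in> {1, -1}" "\<forall>i<2 * h. \<forall>j<2 * h. H' $$ (i, j) \<in> {1, -1}"
    using H H' by (auto simp: hadamard_matrix_def)
  have C: "col_halves_sum h H \<in> carrier_mat (2 * h) h" "col_halves_diff h H \<in> carrier_mat (2 * h) h"
    "col_halves_sum h H' \<in> carrier_mat (2 * h) h" "col_halves_diff h H' \<in> carrier_mat (2 * h) h"
    using Hc by (auto simp: col_halves_sum_def col_halves_diff_def)
  show ?thesis
    unfolding od_eval_od_halves_kron[OF Dc Hc(1) Hpm(1)] od_eval_od_halves_kron[OF Dc Hc(2) Hpm(2)]
      halves_kron_mult_transpose[OF E EE C] col_halves_mult_transpose[OF Hc] by (rule refl)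
qed

lemma orthogonal_design_od_halves_kron:
  assumes D: "orthogonal_design (2 * K) u s D" and H: "hadamard_matrix (2 * h) H"
  shows "orthogonal_design (K * (2 * h)) u (\<lambda>i. h * s i) (od_halves_kron K h D H)"
proof -
  have Dc: "D \<in> carrier_mat (2 * K) (2 * K)" and Db: "\<forall>i<2 * K. \<forall>j<2 * K. \<bar>D $$ (i, j)\<bar> \<le> int u"
    using D by (auto simp: orthogonal_design_def)
  have Hc: "H \<in> carrier_mat (2 * h) (2 * h)" and HH: "H * H\<^sup>T = real (2 * h) \<cdot>\<^sub>m 1\<^sub>m (2 * h)"
    using H by (auto simp: hadamard_matrix_def)
  have "od_halves_kron K h D H \<in> carrier_mat (K * (2 * h)) (K * (2 * h))"
    using od_halves_kron_carrier[of K h D H] Dc Hc by (simp add: mult.commute mult.left_commute)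
  moreover have "\<forall>r<K * (2 * h). \<forall>c<K * (2 * h). \<bar>od_halves_kron K h D H $$ (r, c)\<bar> \<le> int u"
    using od_halves_kron_entry_bound[OF Dc Db] Hc by (simp add: mult.commute mult.left_commute)
  moreover have "(1 / 2) \<cdot>\<^sub>m (H * H\<^sup>T) = real h \<cdot>\<^sub>m 1\<^sub>m (2 * h)"
    using HH by (simp add: smult_smult_mat)
  then have "\<forall>x. od_eval (od_halves_kron K h D H) x * (od_eval (od_halves_kron K h D H) x)\<^sup>T
    = od_form u (\<lambda>i. h * s i) x \<cdot>\<^sub>m 1\<^sub>m (K * (2 * h))"
    by (simp add: od_halves_kron_mult_transpose[OF D H H] diag_blocks_smult_one smult_smult_mat
        od_form_scale mult.commute)
  ultimately show ?thesis
    unfolding orthogonal_design_def by blast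
qed

lemma diag_blocks_index_in:
  assumes "\<forall>i<dim_row M. \<forall>j<dim_col M. M $$ (i, j) \<in> S" "0 \<in> S"
    and rc: "r < K * dim_row M" "c < K * dim_col M"
  shows "diag_blocks K M $$ (r, c) \<in> S"
proof -
  have "0 < dim_row M" "0 < dim_col M"
    using rc by (auto intro!: gr0I)
  then show ?thesis
    using assms by (auto simp: diag_blocks_def)
qed

lemma unbiased_ods_od_halves_kron:
  assumes D: "orthogonal_design (2 * K) u s D"
    and H1: "hadamard_matrix (2 * h) H1" and H2: "hadamard_matrix (2 * h) H2"
    and QU: "quasi_unbiased (2 * h) (2 * h) l a H1 H2" and h: "0 < h"
  shows "unbiased_ods (K * (2 * h)) u (\<lambda>i. h * s i) (4 * (real h)\<^sup>2 / a)
    (od_halves_kron K h D H1) (od_halves_kron K h D H2)"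
proof -
  define W where "W = (1 / sqrt a) \<cdot>\<^sub>m (H1 * H2\<^sup>T)"
  have a: "0 < a" and W: "W \<in> carrier_mat (2 * h) (2 * h)" "\<forall>i<2 * h. \<forall>j<2 * h. W $$ (i, j) \<in> {0, 1, -1}"
    using QU by (auto simp: quasi_unbiased_def weighing_matrix_def W_def)
  have V: "diag_blocks K W \<in> carrier_mat (K * (2 * h)) (K * (2 * h))"
    "\<forall>r<K * (2 * h). \<forall>c<K * (2 * h). diag_blocks K W $$ (r, c) \<in> {0, 1, -1}"
    using W diag_blocks_index_in[of W "{0, 1, -1}" _ K] by (auto simp: diag_blocks_def)
  have half_prod: "(1 / 2) \<cdot>\<^sub>m (H1 * H2\<^sup>T) = (sqrt a / 2) \<cdot>\<^sub>m W"
    using a by (simp add: W_def smult_smult_mat)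
  have "od_eval (od_halves_kron K h D H1) x * (od_eval (od_halves_kron K h D H2) x)\<^sup>T
    = (od_form u s x * (sqrt a / 2)) \<cdot>\<^sub>m diag_blocks K W" for x
    unfolding od_halves_kron_mult_transpose[OF D H1 H2] half_prod diag_blocks_smult smult_smult_mat
    by (rule refl)
  moreover have "od_form u s x * (sqrt a / 2) = od_form u (\<lambda>i. h * s i) x / sqrt (4 * (real h)\<^sup>2 / a)" for x
    using a h by (simp add: od_form_scale real_sqrt_divide real_sqrt_mult field_simps)
  ultimately have "\<forall>x. od_eval (od_halves_kron K h D H1) x * (od_eval (od_halves_kron K h D H2) x)\<^sup>T
    = (od_form u (\<lambda>i. h * s i) x / sqrt (4 * (real h)\<^sup>2 / a)) \<cdot>\<^sub>m diag_blocks K W"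
    by simp
  moreover have "0 < 4 * (real h)\<^sup>2 / a"
    using a h by simp
  ultimately show ?thesis
    unfolding unbiased_ods_def
    using orthogonal_design_od_halves_kron[OF D H1] orthogonal_design_od_halves_kron[OF D H2] V by blast
qed

theorem proposition3p12:
  fixes m n u l :: nat and s :: "nat \<Rightarrow> nat" and a :: real
    and D :: "int mat" and H1 H2 :: "real mat"
  assumes "m > 0" and "n > 0"
    and "orthogonal_design (4*m) u s D"
    and "hadamard_matrix (4*n) H1" and "hadamard_matrix (4*n) H2"
    and "quasi_unbiased (4*n) (4*n) l a H1 H2"
  shows "\<exists>D1 D2. unbiased_ods (8*m*n) u (\<lambda>i. 2*n*s i) (16 * (real n)\<^sup>2 / a) D1 D2"
proof -
  have "unbiased_ods (2 * m * (2 * (2 * n))) u (\<lambda>i. 2 * n * s i) (4 * (real (2 * n))\<^sup>2 / a)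
    (od_halves_kron (2 * m) (2 * n) D H1) (od_halves_kron (2 * m) (2 * n) D H2)"
    using assms by (intro unbiased_ods_od_halves_kron) simp_all
  moreover have "2 * m * (2 * (2 * n)) = 8 * m * n" "4 * (real (2 * n))\<^sup>2 = 16 * (real n)\<^sup>2"
    by (simp_all add: power_mult_distrib)
  ultimately show ?thesis
    by metis
qed

end
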